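(* Let $(x_i,y_i)_{i=1}^n$ be i.i.d. from a coupling $\hat\pi$ of $\alpha,\beta$. Let $\pi$ be a coupling of $\alpha,\beta$ with bounded density $p=\frac{d\pi}{d(\alpha\otimes\beta)}$, and $P=\frac1{n^2}(p(x_i,y_j))_{i,j=1}^n$. Then $\mathbb E\|\hat\Phi_n^*P-\Phi^*(p\,\alpha\otimes\beta)\|^2=O(n^{-1})$, and there is a constant $c$ (independent of $n,t$) such that for every $t>0$, with probability at least $1-2\exp(-2t^2/(64\|p\|_\infty^2))$, $$\|\hat\Phi_n^*P-\Phi^*(p\,\alpha\otimes\beta)\|\le c\,\frac{1+t}{\sqrt n}.$$
   Context: $\mathcal X,\mathcal Y$ compact metric spaces, $\alpha\in\mathcal P(\mathcal X)$, $\beta\in\mathcal P(\mathcal Y)$, $\mathbf C=(\mathbf C_1,\dots,\mathbf C_s):\mathcal X\times\mathcal Y\to\mathbb{R}^s$ continuous with $\|\mathbf C(x,y)\|\le1$. $\Phi^*\mu=(\int\mathbf C_kd\mu)_{k=1}^s$ for a measure $\mu$; for $P\in\mathbb{R}^{n\times n}$, $\hat\Phi_n^*P=\sum_{i,j}\mathbf C(x_i,y_j)P_{ij}\in\mathbb{R}^s$ (uncentered). $\|\cdot\|$ is the Euclidean norm on $\mathbb{R}^s$. *)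

theory Defs
  imports "HOL-Probability.Probability" "HOL-Library.Landau_Symbols"
begin

definition is_coupling :: "'a measure \<Rightarrow> 'b measure \<Rightarrow> ('a \<times> 'b) measure \<Rightarrow> bool" where
  "is_coupling \<alpha> \<beta> \<pi> \<longleftrightarrow> prob_space \<pi> \<and> sets \<pi> = sets (\<alpha> \<Otimes>\<^sub>M \<beta>)
     \<and> distr \<pi> \<alpha> fst = \<alpha> \<and> distr \<pi> \<beta> snd = \<beta>"

definition Phi_hat_star_P :: "('a \<times> 'b \<Rightarrow> real^'s) \<Rightarrow> ('a \<times> 'b \<Rightarrow> real) \<Rightarrow> nat \<Rightarrow> (nat \<Rightarrow> 'a \<times> 'b) \<Rightarrow> real^'s" where
  "Phi_hat_star_P C p n \<omega> =
     (\<Sum>i<n. \<Sum>j<n. (p (fst (\<omega> i), snd (\<omega> j)) / (real n)^2) *\<^sub>R C (fst (\<omega> i), snd (\<omega> j)))"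

definition Phi_star_density :: "('a \<times> 'b \<Rightarrow> real^'s) \<Rightarrow> ('a \<times> 'b) measure \<Rightarrow> ('a \<times> 'b \<Rightarrow> real) \<Rightarrow> real^'s" where
  "Phi_star_density C M p = (\<chi> k. integral\<^sup>L M (\<lambda>z. p z * C z $ k))"

end

(*
  Write V for the estimator and Phi for its target. For i <> j the pair (x_i, y_j) takes its
  coordinates from two independent draws of the coupling, so it is distributed according to
  alpha (x) beta: only the n diagonal terms among the n^2 summands of V are biased, and
  |E V - Phi| <= 2 sup|p| / n. Replacing a single draw changes fewer than 2n summands, hence V
  by at most 4 sup|p| / n. Integrating out one coordinate at a time, this bounded-difference
  property yields the variance bound Var V_k <= n (4 sup|p| / n)^2 (Efron-Stein) and, through
  Hoeffding's lemma in each coordinate, a sub-Gaussian moment generating function for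
  |V - Phi| (McDiarmid). The first gives the O(1/n) mean-square error and, by Jensen,
  E |V - Phi| = O(n^(-1/2)); the Chernoff bound around this mean gives the tail estimate.
*)
theory Submission
  imports Defs
begin

lemma compact_metric_countable_basis:
  assumes "compact (UNIV :: 'a::metric_space set)"
  obtains B where "countable (B :: 'a set set)" "topological_basis B"
proof -
  have "\<forall>e>0. \<exists>k. finite k \<and> k \<subseteq> UNIV \<and> (UNIV :: 'a set) \<subseteq> (\<Union>x\<in>k. ball x e)"
    by (rule seq_compact_imp_totally_bounded[OF compact_imp_seq_compact[OF assms]])
  then have "\<forall>m::nat. \<exists>k. finite k \<and> k \<subseteq> UNIV \<and> (UNIV :: 'a set) \<subseteq> (\<Union>x\<in>k. ball x (1 / Suc m))"
    by simp
  then obtain F :: "nat \<Rightarrow> 'a set"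
    where F: "\<And>m. finite (F m)" "\<And>m. UNIV \<subseteq> (\<Union>x\<in>F m. ball x (1 / Suc m))"
    by metis
  define B where "B = (\<Union>m. (\<lambda>x. ball x (1 / Suc m)) ` F m)"
  have "countable B"
    unfolding B_def by (rule countable_UN) (auto intro: countable_finite F(1))
  moreover have "topological_basis B"
  proof (rule topological_basisI)
    fix U :: "'a set" and x :: 'a
    assume "open U" "x \<in> U"
    then obtain e where e: "e > 0" "ball x e \<subseteq> U"
      by (meson openE)
    obtain m :: nat where m: "1 / Suc m < e / 2"
      using nat_approx_posE[of "e / 2"] e(1) by auto
    obtain a where a: "a \<in> F m" "x \<in> ball a (1 / Suc m)"
      using F(2)[of m] by blast
    have "ball a (1 / Suc m) \<subseteq> ball x e"
    proof
      fix y assume "y \<in> ball a (1 / Suc m)"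
      then have "dist x a + dist a y < e"
        using a(2) m by (simp add: dist_commute)
      then show "y \<in> ball x e"
        using dist_triangle[of x y a] by simp
    qed
    then show "\<exists>b\<in>B. x \<in> b \<and> b \<subseteq> U"
      using a e(2) unfolding B_def by blast
  qed (auto simp: B_def)
  ultimately show thesis by (rule that)
qed

(* borel_prod needs second countability as a type class, so for compact metric types the
   countable bases are constructed by hand. *)
lemma open_in_sets_borel_pair:
  assumes "compact (UNIV :: 'a::metric_space set)" "compact (UNIV :: 'b::metric_space set)"
    and "open (U :: ('a \<times> 'b) set)"
  shows "U \<in> sets (borel \<Otimes>\<^sub>M borel)"
proof -
  obtain A :: "'a set set" where A: "countable A" "topological_basis A"
    using compact_metric_countable_basis[OF assms(1)] by blast
  obtain B :: "'b set set" where B: "countable B" "topological_basis B"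
    using compact_metric_countable_basis[OF assms(2)] by blast
  let ?AB = "(\<lambda>(a, b). a \<times> b) ` (A \<times> B)"
  obtain R where R: "R \<subseteq> ?AB" "\<Union>R = U"
    using topological_basis_prod[OF A(2) B(2)] assms(3) unfolding topological_basis_def by blast
  have "countable R"
    using countable_subset[OF R(1)] A(1) B(1) by blast
  moreover have "R \<subseteq> sets (borel \<Otimes>\<^sub>M borel)"
    using R(1) topological_basis_open[OF A(2)] topological_basis_open[OF B(2)]
    by auto
  ultimately show ?thesis
    using R(2) sets.countable_Union by blast
qed

lemma continuous_on_imp_borel_measurable_pair:
  fixes f :: "'a::metric_space \<times> 'b::metric_space \<Rightarrow> 'c::topological_space"
  assumes "compact (UNIV :: 'a set)" "compact (UNIV :: 'b set)" "continuous_on UNIV f"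
  shows "f \<in> borel_measurable (borel \<Otimes>\<^sub>M borel)"
proof (rule borel_measurableI)
  fix S :: "'c set" assume "open S"
  then have "open (f -` S)" by (rule open_vimage[OF _ assms(3)])
  then show "f -` S \<inter> space (borel \<Otimes>\<^sub>M borel) \<in> sets (borel \<Otimes>\<^sub>M borel)"
    using open_in_sets_borel_pair[OF assms(1,2)] by (simp add: space_pair_measure)
qed

lemma component_measurable:
  "f \<in> borel_measurable M \<Longrightarrow> (\<lambda>x. f x $ k) \<in> borel_measurable M"
  for f :: "'c \<Rightarrow> real^'s"
  by (rule borel_measurable_continuous_on[OF continuous_on_component[OF continuous_on_id]])

lemma (in prob_space) integrable_bounded:
  fixes f :: "'a \<Rightarrow> real"
  assumes "f \<in> borel_measurable M" "\<And>x. x \<in> space M \<Longrightarrow> \<bar>f x\<bar> \<le> K"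
  shows "integrable M f"
  using assms by (intro integrable_const_bound[where B=K]) auto

lemma (in prob_space) abs_expectation_le:
  fixes f :: "'a \<Rightarrow> real"
  assumes "f \<in> borel_measurable M" "\<And>x. x \<in> space M \<Longrightarrow> \<bar>f x\<bar> \<le> K"
  shows "\<bar>expectation f\<bar> \<le> K"
proof -
  have "f x \<le> K" "- K \<le> f x" if "x \<in> space M" for x
    using assms(2)[OF that] by auto
  with integrable_bounded[OF assms] have "expectation f \<le> K" "- K \<le> expectation f"
    by (auto intro!: integral_le_const integral_ge_const)
  then show ?thesis by linarith
qed

lemma (in prob_space) expectation_square_diff:
  fixes f :: "'a \<Rightarrow> real"
  assumes "integrable M f" "integrable M (\<lambda>x. (f x)\<^sup>2)"
  shows "expectation (\<lambda>x. (f x - a)\<^sup>2)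
           = expectation (\<lambda>x. (f x)\<^sup>2) - (expectation f)\<^sup>2 + (expectation f - a)\<^sup>2"
  using assms by (simp add: power2_diff prob_space)

lemma (in prob_space) abs_diff_expectation_le_oscillation:
  fixes f :: "'a \<Rightarrow> real"
  assumes "integrable M f" "\<And>x y. x \<in> space M \<Longrightarrow> y \<in> space M \<Longrightarrow> \<bar>f x - f y\<bar> \<le> c"
    and "x \<in> space M"
  shows "\<bar>f x - expectation f\<bar> \<le> c"
proof -
  have "f y \<le> f x + c" "f x - c \<le> f y" if "y \<in> space M" for y
    using assms(2)[OF assms(3) that] by auto
  with assms(1) have "expectation f \<le> f x + c" "f x - c \<le> expectation f"
    by (auto intro!: integral_le_const integral_ge_const)
  then show ?thesis by linarith
qed

lemma (in prob_space) expectation_square_le_oscillation: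
  fixes f :: "'a \<Rightarrow> real"
  assumes "f \<in> borel_measurable M" "\<And>x. x \<in> space M \<Longrightarrow> \<bar>f x\<bar> \<le> K"
    and "\<And>x y. x \<in> space M \<Longrightarrow> y \<in> space M \<Longrightarrow> \<bar>f x - f y\<bar> \<le> c"
  shows "expectation (\<lambda>x. (f x)\<^sup>2) \<le> (expectation f)\<^sup>2 + c\<^sup>2"
proof -
  have int: "integrable M f" by (rule integrable_bounded[OF assms(1,2)])
  have "(f x)\<^sup>2 \<le> K\<^sup>2" if "x \<in> space M" for x
    using power_mono[OF assms(2)[OF that] abs_ge_zero, of 2] by simp
  with assms(1) have int2: "integrable M (\<lambda>x. (f x)\<^sup>2)"
    by (intro integrable_bounded[where K="K\<^sup>2"]) auto
  have "(f x - expectation f)\<^sup>2 \<le> c\<^sup>2" if "x \<in> space M" for x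
    using power_mono[OF abs_diff_expectation_le_oscillation[OF int assms(3) that] abs_ge_zero, of 2]
    by simp
  then have "expectation (\<lambda>x. (f x - expectation f)\<^sup>2) \<le> c\<^sup>2"
    using int int2 by (intro integral_le_const AE_I2) (auto simp: power2_diff)
  then show ?thesis
    using expectation_square_diff[OF int int2, of "expectation f"] by simp
qed

lemma (in prob_space) nn_integral_exp_le_oscillation:
  fixes f :: "'a \<Rightarrow> real"
  assumes "f \<in> borel_measurable M" "\<And>x. x \<in> space M \<Longrightarrow> \<bar>f x\<bar> \<le> K"
    and "\<And>x y. x \<in> space M \<Longrightarrow> y \<in> space M \<Longrightarrow> \<bar>f x - f y\<bar> \<le> c" and "l > 0"
  shows "(\<integral>\<^sup>+x. exp (l * f x) \<partial>M) \<le> ennreal (exp (l * expectation f + l\<^sup>2 * c\<^sup>2 / 2))"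
proof -
  let ?m = "expectation f"
  interpret interval_bounded_random_variable M f "?m - c" "?m + c"
  proof
    have "f x \<in> {?m - c..?m + c}" if "x \<in> space M" for x
      using abs_diff_expectation_le_oscillation[OF integrable_bounded[OF assms(1,2)] assms(3) that]
      by auto
    then show "AE x in M. f x \<in> {?m - c..?m + c}" by (rule AE_I2)
  qed (fact assms(1))
  have "(\<integral>\<^sup>+x. exp (l * f x) \<partial>M) = (\<integral>\<^sup>+x. exp (l * ?m) * ennreal (exp (l * (f x - ?m))) \<partial>M)"
    by (intro nn_integral_cong) (simp add: algebra_simps flip: ennreal_mult exp_add)
  also have "\<dots> = exp (l * ?m) * (\<integral>\<^sup>+x. exp (l * (f x - ?m)) \<partial>M)"
    using assms(1) by (intro nn_integral_cmult) simp
  also have "\<dots> \<le> exp (l * ?m) * ennreal (exp (l\<^sup>2 * (?m + c - (?m - c))\<^sup>2 / 8))"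
    by (intro mult_left_mono Hoeffdings_lemma_nn_integral assms(4)) simp
  also have "\<dots> = ennreal (exp (l * ?m + l\<^sup>2 * c\<^sup>2 / 2))"
    by (simp add: exp_add ennreal_mult' power2_eq_square algebra_simps)
  finally show ?thesis .
qed

lemma (in prob_space) prob_ge_le_exp_of_nn_integral_exp:
  fixes f :: "'a \<Rightarrow> real"
  assumes "f \<in> borel_measurable M" "l > 0"
    and "(\<integral>\<^sup>+x. exp (l * f x) \<partial>M) \<le> ennreal (exp (l * m + D))"
  shows "prob {x \<in> space M. m + s \<le> f x} \<le> exp (- l * s + D)"
proof -
  have "emeasure M {x \<in> space M. m + s \<le> f x}
      \<le> exp (- l * (m + s)) * (\<integral>\<^sup>+x. ennreal (exp (l * f x)) * indicator (space M) x \<partial>M)"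
    using assms(1,2) by (intro Chernoff_ineq_nn_integral_ge) auto
  also have "(\<integral>\<^sup>+x. ennreal (exp (l * f x)) * indicator (space M) x \<partial>M) = (\<integral>\<^sup>+x. exp (l * f x) \<partial>M)"
    by (intro nn_integral_cong) simp
  also have "ennreal (exp (- l * (m + s))) * \<dots> \<le> exp (- l * (m + s)) * ennreal (exp (l * m + D))"
    by (intro mult_left_mono assms(3)) simp
  also have "\<dots> = exp (- l * s + D)"
    by (simp add: algebra_simps flip: ennreal_mult exp_add)
  finally show ?thesis
    by (simp add: emeasure_eq_measure)
qed

definition bounded_differences :: "('i \<Rightarrow> 'a measure) \<Rightarrow> 'i set \<Rightarrow> (('i \<Rightarrow> 'a) \<Rightarrow> real) \<Rightarrow> real \<Rightarrow> bool"
  where "bounded_differences M I f c \<longleftrightarrow>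
    (\<forall>x\<in>space (PiM I M). \<forall>y\<in>space (PiM I M). \<forall>i\<in>I.
       (\<forall>j\<in>I - {i}. x j = y j) \<longrightarrow> \<bar>f x - f y\<bar> \<le> c)"

lemma bounded_differencesI:
  assumes "\<And>x y i. x \<in> space (PiM I M) \<Longrightarrow> y \<in> space (PiM I M) \<Longrightarrow> i \<in> I \<Longrightarrow>
    (\<And>j. j \<in> I \<Longrightarrow> j \<noteq> i \<Longrightarrow> x j = y j) \<Longrightarrow> \<bar>f x - f y\<bar> \<le> c"
  shows "bounded_differences M I f c"
  using assms unfolding bounded_differences_def by blast

lemma bounded_differencesD:
  assumes "bounded_differences M I f c" "x \<in> space (PiM I M)" "y \<in> space (PiM I M)" "i \<in> I"
    "\<And>j. j \<in> I \<Longrightarrow> j \<noteq> i \<Longrightarrow> x j = y j"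
  shows "\<bar>f x - f y\<bar> \<le> c"
  using assms unfolding bounded_differences_def by blast

lemma fun_upd_in_space_PiM:
  "x \<in> space (PiM I M) \<Longrightarrow> y \<in> space (M i) \<Longrightarrow> x(i := y) \<in> space (PiM (insert i I) M)"
  by (auto simp: space_PiM PiE_def extensional_def Pi_iff)

context product_prob_space
begin

lemma bounded_differences_slice:
  assumes "i \<notin> J" "f \<in> borel_measurable (PiM (insert i J) M)"
    and "bounded_differences M (insert i J) f c" "x \<in> space (PiM J M)"
  shows "(\<lambda>y. f (x(i := y))) \<in> borel_measurable (M i)"
    and "\<And>y y'. y \<in> space (M i) \<Longrightarrow> y' \<in> space (M i) \<Longrightarrow> \<bar>f (x(i := y)) - f (x(i := y'))\<bar> \<le> c"
proof -
  show "(\<lambda>y. f (x(i := y))) \<in> borel_measurable (M i)"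
    using measurable_comp[OF measurable_component_update assms(2), OF assms(4,1)]
    by (simp add: comp_def fun_upd_def)
  show "\<bar>f (x(i := y)) - f (x(i := y'))\<bar> \<le> c" if "y \<in> space (M i)" "y' \<in> space (M i)" for y y'
    using assms(3) fun_upd_in_space_PiM[OF assms(4) that(1)]
      fun_upd_in_space_PiM[OF assms(4) that(2)]
    by (rule bounded_differencesD) auto
qed

lemma integral_slice:
  fixes f :: "('i \<Rightarrow> 'a) \<Rightarrow> real"
  assumes "finite J" "i \<notin> J" "f \<in> borel_measurable (PiM (insert i J) M)"
    and "\<forall>x\<in>space (PiM (insert i J) M). \<bar>f x\<bar> \<le> K"
  shows "(\<lambda>x. \<integral>y. f (x(i := y)) \<partial>M i) \<in> borel_measurable (PiM J M)"
    and "\<forall>x\<in>space (PiM J M). \<bar>\<integral>y. f (x(i := y)) \<partial>M i\<bar> \<le> K"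
    and "(\<integral>x. (\<integral>y. f (x(i := y)) \<partial>M i) \<partial>PiM J M) = (\<integral>x. f x \<partial>PiM (insert i J) M)"
proof -
  interpret PiM: prob_space "PiM (insert i J) M" by (rule prob_space_PiM) (rule prob_space)
  have "(\<lambda>(x, y). f (x(i := y))) \<in> borel_measurable (PiM J M \<Otimes>\<^sub>M M i)"
    using measurable_comp[OF measurable_add_dim assms(3)] by (simp add: comp_def case_prod_unfold)
  then show "(\<lambda>x. \<integral>y. f (x(i := y)) \<partial>M i) \<in> borel_measurable (PiM J M)"
    by (rule M.borel_measurable_lebesgue_integral)
  show "\<forall>x\<in>space (PiM J M). \<bar>\<integral>y. f (x(i := y)) \<partial>M i\<bar> \<le> K"
  proof (intro ballI M.abs_expectation_le)
    fix x assume x: "x \<in> space (PiM J M)"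
    show "(\<lambda>y. f (x(i := y))) \<in> borel_measurable (M i)"
      using measurable_comp[OF measurable_component_update assms(3), OF x assms(2)]
      by (simp add: comp_def fun_upd_def)
    show "\<bar>f (x(i := y))\<bar> \<le> K" if "y \<in> space (M i)" for y
      using assms(4) fun_upd_in_space_PiM[OF x that] by blast
  qed
  show "(\<integral>x. (\<integral>y. f (x(i := y)) \<partial>M i) \<partial>PiM J M) = (\<integral>x. f x \<partial>PiM (insert i J) M)"
    using assms(3,4)
    by (intro product_integral_insert[symmetric] assms(1,2) PiM.integrable_bounded) auto
qed

lemma bounded_differences_integral_slice:
  assumes "i \<notin> J" "f \<in> borel_measurable (PiM (insert i J) M)"
    and "\<forall>x\<in>space (PiM (insert i J) M). \<bar>f x\<bar> \<le> K"
    and "bounded_differences M (insert i J) f c"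
  shows "bounded_differences M J (\<lambda>x. \<integral>y. f (x(i := y)) \<partial>M i) c"
proof (rule bounded_differencesI)
  note slice = bounded_differences_slice[OF assms(1,2,4)]
  have integrable: "integrable (M i) (\<lambda>y. f (x(i := y)))" if "x \<in> space (PiM J M)" for x
    using slice(1)[OF that] assms(3)[rule_format, OF fun_upd_in_space_PiM[OF that]]
    by (rule M.integrable_bounded)
  fix x x' j assume x: "x \<in> space (PiM J M)" and x': "x' \<in> space (PiM J M)" and "j \<in> J"
    and eq: "\<And>j'. j' \<in> J \<Longrightarrow> j' \<noteq> j \<Longrightarrow> x j' = x' j'"
  have diff: "\<bar>f (x(i := y)) - f (x'(i := y))\<bar> \<le> c" if "y \<in> space (M i)" for y
    using assms(4) fun_upd_in_space_PiM[OF x that] fun_upd_in_space_PiM[OF x' that]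
  proof (rule bounded_differencesD)
    show "j \<in> insert i J" using \<open>j \<in> J\<close> by simp
  qed (use eq assms(1) \<open>j \<in> J\<close> in auto)
  have "(\<integral>y. f (x(i := y)) \<partial>M i) - (\<integral>y. f (x'(i := y)) \<partial>M i)
      = (\<integral>y. f (x(i := y)) - f (x'(i := y)) \<partial>M i)"
    by (rule Bochner_Integration.integral_diff[symmetric]) (rule integrable, fact)+
  also have "\<bar>\<dots>\<bar> \<le> c"
    by (intro M.abs_expectation_le borel_measurable_diff slice(1) x x' diff)
  finally show "\<bar>(\<integral>y. f (x(i := y)) \<partial>M i) - (\<integral>y. f (x'(i := y)) \<partial>M i)\<bar> \<le> c" .
qed

lemma bounded_differences_second_moment:
  fixes f :: "('i \<Rightarrow> 'a) \<Rightarrow> real" and c K :: real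
  assumes "finite J" "f \<in> borel_measurable (PiM J M)" "\<forall>x\<in>space (PiM J M). \<bar>f x\<bar> \<le> K"
    and "bounded_differences M J f c"
  shows "(\<integral>x. (f x)\<^sup>2 \<partial>PiM J M) \<le> (\<integral>x. f x \<partial>PiM J M)\<^sup>2 + card J * c\<^sup>2"
  using assms
proof (induction J arbitrary: f rule: finite_induct)
  case empty
  then show ?case by (simp add: PiM_empty lebesgue_integral_count_space_finite)
next
  case (insert i J)
  interpret PiM: prob_space "PiM J M" by (rule prob_space_PiM) (rule prob_space)
  define g where "g x = (\<integral>y. f (x(i := y)) \<partial>M i)" for x
  note g = integral_slice[OF insert.hyps insert.prems(1,2), folded g_def]
  have sq_le: "\<forall>x\<in>space (PiM (insert i J) M). \<bar>(f x)\<^sup>2\<bar> \<le> K\<^sup>2"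
    using insert.prems(2) by (auto simp: power2_le_iff_abs_le)
  note g2 = integral_slice[OF insert.hyps borel_measurable_power[OF insert.prems(1)] sq_le]
  have "\<forall>x\<in>space (PiM J M). \<bar>(g x)\<^sup>2\<bar> \<le> K\<^sup>2"
    using g(2) by (auto simp: power2_le_iff_abs_le)
  with g(1) have g2_int: "integrable (PiM J M) (\<lambda>x. (g x)\<^sup>2)"
    by (intro PiM.integrable_bounded) auto
  have "(\<integral>x. (f x)\<^sup>2 \<partial>PiM (insert i J) M) = (\<integral>x. (\<integral>y. (f (x(i := y)))\<^sup>2 \<partial>M i) \<partial>PiM J M)"
    by (rule g2(3)[symmetric])
  also have "\<dots> \<le> (\<integral>x. (g x)\<^sup>2 + c\<^sup>2 \<partial>PiM J M)"
  proof (rule integral_mono)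
    show "integrable (PiM J M) (\<lambda>x. \<integral>y. (f (x(i := y)))\<^sup>2 \<partial>M i)"
      using g2(1,2) by (intro PiM.integrable_bounded) auto
    show "(\<integral>y. (f (x(i := y)))\<^sup>2 \<partial>M i) \<le> (g x)\<^sup>2 + c\<^sup>2" if "x \<in> space (PiM J M)" for x
      unfolding g_def using bounded_differences_slice[OF insert.hyps(2) insert.prems(1,3) that]
      by (intro M.expectation_square_le_oscillation[where K=K] insert.prems(2)[rule_format]
          fun_upd_in_space_PiM[OF that])
  qed (use g2_int in simp)
  also have "\<dots> = (\<integral>x. (g x)\<^sup>2 \<partial>PiM J M) + c\<^sup>2"
    using g2_int by (simp add: PiM.prob_space)
  also have "\<dots> \<le> (\<integral>x. g x \<partial>PiM J M)\<^sup>2 + card J * c\<^sup>2 + c\<^sup>2"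
    using insert.IH[OF g(1,2)]
      bounded_differences_integral_slice[OF insert.hyps(2) insert.prems, folded g_def]
    by simp
  also have "\<dots> = (\<integral>x. f x \<partial>PiM (insert i J) M)\<^sup>2 + card (insert i J) * c\<^sup>2"
    using insert.hyps by (simp add: g(3) algebra_simps)
  finally show ?case .
qed

lemma bounded_differences_nn_integral_exp:
  fixes f :: "('i \<Rightarrow> 'a) \<Rightarrow> real" and c K :: real
  assumes "finite J" "f \<in> borel_measurable (PiM J M)" "\<forall>x\<in>space (PiM J M). \<bar>f x\<bar> \<le> K"
    and "bounded_differences M J f c" "l > 0"
  shows "(\<integral>\<^sup>+x. exp (l * f x) \<partial>PiM J M)
           \<le> ennreal (exp (l * (\<integral>x. f x \<partial>PiM J M) + l\<^sup>2 * card J * c\<^sup>2 / 2))"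
  using assms(1-4)
proof (induction J arbitrary: f rule: finite_induct)
  case empty
  then show ?case
    by (simp add: PiM_empty lebesgue_integral_count_space_finite nn_integral_count_space_finite)
next
  case (insert i J)
  define g where "g x = (\<integral>y. f (x(i := y)) \<partial>M i)" for x
  note g = integral_slice[OF insert.hyps insert.prems(1,2), folded g_def]
  let ?D = "l\<^sup>2 * c\<^sup>2 / 2"
  have "(\<integral>\<^sup>+x. exp (l * f x) \<partial>PiM (insert i J) M)
      = (\<integral>\<^sup>+x. (\<integral>\<^sup>+y. exp (l * f (x(i := y))) \<partial>M i) \<partial>PiM J M)"
    using insert.prems(1) by (intro product_nn_integral_insert insert.hyps) simp
  also have "\<dots> \<le> (\<integral>\<^sup>+x. exp (l * g x) * ennreal (exp ?D) \<partial>PiM J M)"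
  proof (rule nn_integral_mono)
    fix x assume x: "x \<in> space (PiM J M)"
    have "(\<integral>\<^sup>+y. exp (l * f (x(i := y))) \<partial>M i) \<le> ennreal (exp (l * g x + ?D))"
      unfolding g_def using bounded_differences_slice[OF insert.hyps(2) insert.prems(1,3) x]
      by (intro M.nn_integral_exp_le_oscillation[where K=K] insert.prems(2)[rule_format]
          fun_upd_in_space_PiM[OF x] assms(5))
    then show "(\<integral>\<^sup>+y. exp (l * f (x(i := y))) \<partial>M i) \<le> exp (l * g x) * ennreal (exp ?D)"
      by (simp add: exp_add ennreal_mult)
  qed
  also have "\<dots> = (\<integral>\<^sup>+x. exp (l * g x) \<partial>PiM J M) * exp ?D"
    using g(1) by (intro nn_integral_multc) simp
  also have "\<dots> \<le> ennreal (exp (l * (\<integral>x. g x \<partial>PiM J M) + l\<^sup>2 * card J * c\<^sup>2 / 2)) * exp ?D"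
    using insert.IH[OF g(1,2)]
      bounded_differences_integral_slice[OF insert.hyps(2) insert.prems, folded g_def]
    by (intro mult_right_mono) simp_all
  also have "\<dots> = ennreal (exp (l * (\<integral>x. f x \<partial>PiM (insert i J) M)
                        + l\<^sup>2 * card (insert i J) * c\<^sup>2 / 2))"
    using insert.hyps by (simp add: g(3) algebra_simps flip: ennreal_mult exp_add)
  finally show ?case .
qed

lemma bounded_differences_tail:
  fixes f :: "('i \<Rightarrow> 'a) \<Rightarrow> real" and c K :: real
  assumes "finite J" "J \<noteq> {}" "f \<in> borel_measurable (PiM J M)"
    and "\<forall>x\<in>space (PiM J M). \<bar>f x\<bar> \<le> K" "bounded_differences M J f c" "c > 0" "\<epsilon> > 0"
  shows "measure (PiM J M) {x \<in> space (PiM J M). (\<integral>x. f x \<partial>PiM J M) + \<epsilon> \<le> f x}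
           \<le> exp (- \<epsilon>\<^sup>2 / (2 * card J * c\<^sup>2))"
proof -
  interpret PiM: prob_space "PiM J M" by (rule prob_space_PiM) (rule prob_space)
  define d where "d = card J * c\<^sup>2"
  have d: "d > 0" using assms(1,2,6) by (simp add: d_def card_gt_0_iff)
  define l where "l = \<epsilon> / d"
  have l: "l > 0" using d assms(7) by (simp add: l_def)
  have "measure (PiM J M) {x \<in> space (PiM J M). (\<integral>x. f x \<partial>PiM J M) + \<epsilon> \<le> f x}
      \<le> exp (- l * \<epsilon> + l\<^sup>2 * d / 2)"
    using bounded_differences_nn_integral_exp[OF assms(1,3,4,5) l]
    by (intro PiM.prob_ge_le_exp_of_nn_integral_exp assms(3) l) (simp add: d_def mult.assoc)
  also have "- l * \<epsilon> + l\<^sup>2 * d / 2 = - \<epsilon>\<^sup>2 / (2 * card J * c\<^sup>2)"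
    using d by (simp add: l_def d_def field_simps power2_eq_square)
  finally show ?thesis .
qed

end

locale empirical_coupling =
  fixes \<alpha> :: "'a::metric_space measure" and \<beta> :: "'b::metric_space measure"
    and C :: "'a \<times> 'b \<Rightarrow> real^'s" and \<pi>h :: "('a \<times> 'b) measure" and p :: "'a \<times> 'b \<Rightarrow> real"
  assumes compact_UNIV_a: "compact (UNIV :: 'a set)" and compact_UNIV_b: "compact (UNIV :: 'b set)"
    and prob_space_\<alpha>: "prob_space \<alpha>" and sets_\<alpha>: "sets \<alpha> = sets borel"
    and prob_space_\<beta>: "prob_space \<beta>" and sets_\<beta>: "sets \<beta> = sets borel"
    and continuous_C: "continuous_on UNIV C" and norm_C_le: "\<And>z. norm (C z) \<le> 1"
    and coupling: "is_coupling \<alpha> \<beta> \<pi>h"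
    and p_measurable: "p \<in> borel_measurable (\<alpha> \<Otimes>\<^sub>M \<beta>)" and bounded_p: "bounded (range p)"
begin

abbreviation "p_sup \<equiv> SUP z. \<bar>p z\<bar>"
abbreviation "sample n \<equiv> PiM {..<n} (\<lambda>_::nat. \<pi>h)"
abbreviation "target \<equiv> Phi_star_density C (\<alpha> \<Otimes>\<^sub>M \<beta>) p"
abbreviation "estimator n \<equiv> Phi_hat_star_P C p n"

definition weighted_cost :: "'a \<times> 'b \<Rightarrow> real^'s" where
  "weighted_cost z = p z *\<^sub>R C z"

lemma abs_p_le_p_sup: "\<bar>p z\<bar> \<le> p_sup"
proof -
  obtain a where "\<forall>x\<in>range p. norm x \<le> a" using bounded_p unfolding bounded_iff by blast
  then have "bdd_above (range (\<lambda>z. \<bar>p z\<bar>))" by (intro bdd_aboveI[where M=a]) auto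
  then show ?thesis by (rule cSUP_upper[OF UNIV_I])
qed

lemma p_sup_nonneg: "0 \<le> p_sup"
  using abs_p_le_p_sup[of undefined] by simp

lemma norm_weighted_cost_le: "norm (weighted_cost z) \<le> p_sup"
  using mult_mono[OF abs_p_le_p_sup norm_C_le p_sup_nonneg norm_ge_zero]
  by (simp add: weighted_cost_def)

lemma measurable_C: "C \<in> borel_measurable (\<alpha> \<Otimes>\<^sub>M \<beta>)"
proof -
  have "sets (\<alpha> \<Otimes>\<^sub>M \<beta>) = sets (borel \<Otimes>\<^sub>M borel)"
    by (rule sets_pair_measure_cong[OF sets_\<alpha> sets_\<beta>])
  then have "measurable (\<alpha> \<Otimes>\<^sub>M \<beta>) (borel :: (real^'s) measure) = measurable (borel \<Otimes>\<^sub>M borel) borel"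
    by (rule measurable_cong_sets) simp
  then show ?thesis
    using continuous_on_imp_borel_measurable_pair[OF compact_UNIV_a compact_UNIV_b continuous_C]
    by simp
qed

lemma weighted_cost_measurable: "weighted_cost \<in> borel_measurable (\<alpha> \<Otimes>\<^sub>M \<beta>)"
  unfolding weighted_cost_def using measurable_C p_measurable
  by (rule borel_measurable_scaleR[rotated])

lemma weighted_cost_component_measurable: "(\<lambda>z. weighted_cost z $ k) \<in> borel_measurable (\<alpha> \<Otimes>\<^sub>M \<beta>)"
  by (rule component_measurable[OF weighted_cost_measurable])

lemma target_component: "target $ k = (\<integral>z. weighted_cost z $ k \<partial>(\<alpha> \<Otimes>\<^sub>M \<beta>))"
  by (simp add: Phi_star_density_def weighted_cost_def)

lemma prob_space_pair_\<alpha>_\<beta>: "prob_space (\<alpha> \<Otimes>\<^sub>M \<beta>)"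
  by (rule prob_space_pair[OF prob_space_\<alpha> prob_space_\<beta>])

lemma abs_target_component_le: "\<bar>target $ k\<bar> \<le> p_sup"
  unfolding target_component
  by (rule prob_space.abs_expectation_le[OF prob_space_pair_\<alpha>_\<beta> weighted_cost_component_measurable])
     (rule order_trans[OF component_le_norm_cart norm_weighted_cost_le])

lemma estimator_eq:
  "estimator n \<omega> = (\<Sum>i<n. \<Sum>j<n. weighted_cost (fst (\<omega> i), snd (\<omega> j))) /\<^sub>R (real n)\<^sup>2"
  unfolding Phi_hat_star_P_def weighted_cost_def scaleR_sum_right scaleR_scaleR
  by (simp add: field_simps)

lemma prob_space_\<pi>h: "prob_space \<pi>h" and sets_\<pi>h: "sets \<pi>h = sets (\<alpha> \<Otimes>\<^sub>M \<beta>)"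
  and distr_fst_\<pi>h: "distr \<pi>h \<alpha> fst = \<alpha>" and distr_snd_\<pi>h: "distr \<pi>h \<beta> snd = \<beta>"
  using coupling unfolding is_coupling_def by auto

lemma measurable_fst_\<pi>h: "fst \<in> measurable \<pi>h \<alpha>"
  by (subst measurable_cong_sets[OF sets_\<pi>h refl]) simp

lemma measurable_snd_\<pi>h: "snd \<in> measurable \<pi>h \<beta>"
  by (subst measurable_cong_sets[OF sets_\<pi>h refl]) simp

lemma product_prob_space_iid: "product_prob_space (\<lambda>_::nat. \<pi>h)"
  by (simp add: product_prob_space_def product_prob_space_axioms_def product_sigma_finite_def
      prob_space_\<pi>h prob_space_imp_sigma_finite)

lemma prob_space_sample: "prob_space (sample n)"
  by (rule prob_space_PiM) (rule prob_space_\<pi>h)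

lemma measurable_cross_pair:
  assumes "i < n" "j < n"
  shows "(\<lambda>\<omega>. (fst (\<omega> i), snd (\<omega> j))) \<in> measurable (sample n) (\<alpha> \<Otimes>\<^sub>M \<beta>)"
proof (rule measurable_Pair)
  show "(\<lambda>\<omega>. fst (\<omega> i)) \<in> measurable (sample n) \<alpha>"
    using measurable_comp[OF measurable_component_singleton[of i "{..<n}" "\<lambda>_. \<pi>h"]
        measurable_fst_\<pi>h] assms(1)
    by (simp add: comp_def)
  show "(\<lambda>\<omega>. snd (\<omega> j)) \<in> measurable (sample n) \<beta>"
    using measurable_comp[OF measurable_component_singleton[of j "{..<n}" "\<lambda>_. \<pi>h"]
        measurable_snd_\<pi>h] assms(2)
    by (simp add: comp_def)
qed

lemma distr_cross_pair:
  assumes "i < n" "j < n" "i \<noteq> j"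
  shows "distr (sample n) (\<alpha> \<Otimes>\<^sub>M \<beta>) (\<lambda>\<omega>. (fst (\<omega> i), snd (\<omega> j))) = \<alpha> \<Otimes>\<^sub>M \<beta>"
proof (rule pair_measure_eqI[symmetric])
  let ?F = "\<lambda>\<omega>. (fst (\<omega> i), snd (\<omega> j))"
  show "sigma_finite_measure \<alpha>" "sigma_finite_measure \<beta>"
    by (simp_all add: prob_space_imp_sigma_finite prob_space_\<alpha> prob_space_\<beta>)
  fix A B assume A: "A \<in> sets \<alpha>" and B: "B \<in> sets \<beta>"
  define X where "X l = (if l = i then fst -` A \<inter> space \<pi>h else snd -` B \<inter> space \<pi>h)" for l
  have X_sets: "X l \<in> sets \<pi>h" for l
    unfolding X_def
    using measurable_sets[OF measurable_fst_\<pi>h A] measurable_sets[OF measurable_snd_\<pi>h B]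
    by simp
  have "emeasure (distr (sample n) (\<alpha> \<Otimes>\<^sub>M \<beta>) ?F) (A \<times> B)
      = emeasure (sample n) (?F -` (A \<times> B) \<inter> space (sample n))"
    using A B by (intro emeasure_distr measurable_cross_pair assms(1,2)) auto
  also have "?F -` (A \<times> B) \<inter> space (sample n) = {\<omega> \<in> space (sample n). \<forall>l\<in>{i, j}. \<omega> l \<in> X l}"
    using assms by (auto simp: X_def space_PiM)
  also have "emeasure (sample n) \<dots> = (\<Prod>l\<in>{i, j}. emeasure \<pi>h (X l))"
    using assms X_sets
    by (intro product_prob_space.emeasure_PiM_Collect product_prob_space_iid) auto
  also have "\<dots> = emeasure \<pi>h (fst -` A \<inter> space \<pi>h) * emeasure \<pi>h (snd -` B \<inter> space \<pi>h)"
    using assms(3) by (simp add: X_def)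
  also have "\<dots> = emeasure \<alpha> A * emeasure \<beta> B"
    using emeasure_distr[OF measurable_fst_\<pi>h A] emeasure_distr[OF measurable_snd_\<pi>h B]
    by (simp add: distr_fst_\<pi>h distr_snd_\<pi>h)
  finally show "emeasure \<alpha> A * emeasure \<beta> B = emeasure (distr (sample n) (\<alpha> \<Otimes>\<^sub>M \<beta>) ?F) (A \<times> B)" ..
qed simp

lemma integral_cross_pair:
  fixes g :: "'a \<times> 'b \<Rightarrow> real"
  assumes "i < n" "j < n" "i \<noteq> j" "g \<in> borel_measurable (\<alpha> \<Otimes>\<^sub>M \<beta>)"
  shows "(\<integral>\<omega>. g (fst (\<omega> i), snd (\<omega> j)) \<partial>sample n) = (\<integral>z. g z \<partial>(\<alpha> \<Otimes>\<^sub>M \<beta>))"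
  using integral_distr[OF measurable_cross_pair[OF assms(1,2)] assms(4)]
    distr_cross_pair[OF assms(1-3)]
  by simp

lemma estimator_measurable: "estimator n \<in> borel_measurable (sample n)"
proof -
  have "(\<lambda>\<omega>. weighted_cost (fst (\<omega> i), snd (\<omega> j))) \<in> borel_measurable (sample n)"
    if "i < n" "j < n" for i j
    using measurable_comp[OF measurable_cross_pair[OF that] weighted_cost_measurable]
    by (simp add: comp_def)
  then show ?thesis
    unfolding estimator_eq
    by (intro borel_measurable_scaleR borel_measurable_const borel_measurable_sum) auto
qed

lemma norm_estimator_le:
  assumes "n \<ge> 1"
  shows "norm (estimator n \<omega>) \<le> p_sup"
proof -
  have "norm (estimator n \<omega>) = norm (\<Sum>i<n. \<Sum>j<n. weighted_cost (fst (\<omega> i), snd (\<omega> j))) / (real n)\<^sup>2"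
    by (simp add: estimator_eq divide_inverse_commute)
  also have "\<dots> \<le> (\<Sum>i<n. \<Sum>j<n. norm (weighted_cost (fst (\<omega> i), snd (\<omega> j)))) / (real n)\<^sup>2"
    by (intro divide_right_mono order_trans[OF norm_sum sum_mono[OF norm_sum]]) simp
  also have "\<dots> \<le> (\<Sum>i<n. \<Sum>j<n. p_sup) / (real n)\<^sup>2"
    by (intro divide_right_mono sum_mono norm_weighted_cost_le) simp
  also have "\<dots> = p_sup"
    using assms by (simp add: power2_eq_square)
  finally show ?thesis .
qed

lemma norm_estimator_diff_le:
  assumes "m < n" and eq: "\<And>j. j < n \<Longrightarrow> j \<noteq> m \<Longrightarrow> \<omega> j = \<omega>' j"
  shows "norm (estimator n \<omega> - estimator n \<omega>') \<le> 4 * p_sup / real n"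
proof -
  let ?w = "\<lambda>\<omega> i j. weighted_cost (fst (\<omega> i), snd (\<omega> j))"
  let ?hits = "\<lambda>i j. of_bool (i = m) + of_bool (j = m) :: real"
  have term_le: "norm (?w \<omega> i j - ?w \<omega>' i j) \<le> 2 * p_sup * ?hits i j" if "i < n" "j < n" for i j
  proof (cases "i = m \<or> j = m")
    case True
    have "norm (?w \<omega> i j - ?w \<omega>' i j) \<le> 2 * p_sup"
      using norm_triangle_ineq4[of "?w \<omega> i j" "?w \<omega>' i j"]
        norm_weighted_cost_le[of "(fst (\<omega> i), snd (\<omega> j))"]
        norm_weighted_cost_le[of "(fst (\<omega>' i), snd (\<omega>' j))"] by linarith
    also have "\<dots> \<le> 2 * p_sup * ?hits i j"
      using True p_sup_nonneg by auto
    finally show ?thesis .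
  qed (use eq that in auto)
  have hits: "(\<Sum>i<n. \<Sum>j<n. ?hits i j) = 2 * real n"
    using assms(1) by (simp add: sum.distrib)
  have "norm (estimator n \<omega> - estimator n \<omega>') = norm (\<Sum>i<n. \<Sum>j<n. ?w \<omega> i j - ?w \<omega>' i j) / (real n)\<^sup>2"
    by (simp add: estimator_eq divide_inverse_commute sum_subtractf flip: scaleR_diff_right)
  also have "\<dots> \<le> (\<Sum>i<n. \<Sum>j<n. 2 * p_sup * ?hits i j) / (real n)\<^sup>2"
    using term_le
    by (intro divide_right_mono
        order_trans[OF norm_sum sum_mono[OF order_trans[OF norm_sum sum_mono]]]) auto
  also have "\<dots> = 4 * p_sup / real n"
    using assms(1) by (simp add: hits flip: sum_distrib_left) (simp add: power2_eq_square)
  finally show ?thesis .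
qed

lemma estimator_component:
  "estimator n \<omega> $ k = (\<Sum>i<n. \<Sum>j<n. weighted_cost (fst (\<omega> i), snd (\<omega> j)) $ k) / (real n)\<^sup>2"
  by (simp add: estimator_eq divide_inverse_commute)

lemma expectation_estimator_component_bias:
  assumes "n \<ge> 1"
  shows "\<bar>(\<integral>\<omega>. estimator n \<omega> $ k \<partial>sample n) - target $ k\<bar> \<le> 2 * p_sup / real n"
proof -
  interpret S: prob_space "sample n" by (rule prob_space_sample)
  let ?g = "\<lambda>i j \<omega>. weighted_cost (fst (\<omega> i), snd (\<omega> j)) $ k"
  let ?e = "\<lambda>i j. \<integral>\<omega>. ?g i j \<omega> \<partial>sample n"
  have g_measurable: "?g i j \<in> borel_measurable (sample n)" if "i < n" "j < n" for i j
    using measurable_comp[OF measurable_cross_pair[OF that] weighted_cost_component_measurable]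
    by (simp add: comp_def)
  have g_bound: "\<bar>?g i j \<omega>\<bar> \<le> p_sup" for i j and \<omega> :: "nat \<Rightarrow> 'a \<times> 'b"
    by (rule order_trans[OF component_le_norm_cart norm_weighted_cost_le])
  have g_integrable: "integrable (sample n) (?g i j)" if "i < n" "j < n" for i j
    using g_measurable[OF that] g_bound by (rule S.integrable_bounded)
  have "(\<integral>\<omega>. (\<Sum>i<n. \<Sum>j<n. ?g i j \<omega>) \<partial>sample n) = (\<Sum>i<n. \<integral>\<omega>. (\<Sum>j<n. ?g i j \<omega>) \<partial>sample n)"
    using g_integrable
    by (intro Bochner_Integration.integral_sum Bochner_Integration.integrable_sum) auto
  also have "\<dots> = (\<Sum>i<n. \<Sum>j<n. ?e i j)"
    using g_integrable by (intro sum.cong refl Bochner_Integration.integral_sum) auto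
  finally have "(\<integral>\<omega>. estimator n \<omega> $ k \<partial>sample n) = (\<Sum>i<n. \<Sum>j<n. ?e i j) / (real n)\<^sup>2"
    unfolding estimator_component integral_divide_zero by simp
  moreover have "target $ k = (\<Sum>i<n. \<Sum>j<n. target $ k) / (real n)\<^sup>2"
    using assms by (simp add: power2_eq_square)
  ultimately have "(\<integral>\<omega>. estimator n \<omega> $ k \<partial>sample n) - target $ k
      = (\<Sum>i<n. \<Sum>j<n. ?e i j - target $ k) / (real n)\<^sup>2"
    by (simp add: sum_subtractf diff_divide_distrib)
  also have "\<bar>\<dots>\<bar> = \<bar>\<Sum>i<n. \<Sum>j<n. ?e i j - target $ k\<bar> / (real n)\<^sup>2"
    by simp
  also have "\<dots> \<le> (\<Sum>i<n. \<Sum>j<n. if i = j then 2 * p_sup else 0) / (real n)\<^sup>2"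
  proof (intro divide_right_mono
      order_trans[OF sum_abs sum_mono[OF order_trans[OF sum_abs sum_mono]]])
    fix i j assume "i \<in> {..<n}" "j \<in> {..<n}"
    then have ij: "i < n" "j < n" by auto
    show "\<bar>?e i j - target $ k\<bar> \<le> (if i = j then 2 * p_sup else 0)"
    proof (cases "i = j")
      case True
      have "\<bar>?e i j\<bar> \<le> p_sup"
        using g_measurable[OF ij] g_bound by (rule S.abs_expectation_le)
      then show ?thesis
        using True abs_target_component_le[of k] by simp
    next
      case False
      then show ?thesis
        using integral_cross_pair[OF ij False weighted_cost_component_measurable]
        by (simp add: target_component)
    qed
  qed simp
  also have "\<dots> = 2 * p_sup / real n"
    by (simp add: power2_eq_square)
  finally show ?thesis .
qed

abbreviation "error n \<omega> \<equiv> norm (estimator n \<omega> - target)"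

lemma estimator_component_bounded_differences:
  assumes "n \<ge> 1"
  shows "bounded_differences (\<lambda>_. \<pi>h) {..<n} (\<lambda>\<omega>. estimator n \<omega> $ k) (4 * p_sup / real n)"
proof (rule bounded_differencesI)
  fix \<omega> \<omega>' :: "nat \<Rightarrow> 'a \<times> 'b" and m assume "m \<in> {..<n}" "\<And>j. j \<in> {..<n} \<Longrightarrow> j \<noteq> m \<Longrightarrow> \<omega> j = \<omega>' j"
  then have "norm (estimator n \<omega> - estimator n \<omega>') \<le> 4 * p_sup / real n"
    by (intro norm_estimator_diff_le) auto
  then show "\<bar>estimator n \<omega> $ k - estimator n \<omega>' $ k\<bar> \<le> 4 * p_sup / real n"
    using component_le_norm_cart[of "estimator n \<omega> - estimator n \<omega>'" k] by simp
qed

lemma error_bounded_differences: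
  assumes "n \<ge> 1"
  shows "bounded_differences (\<lambda>_. \<pi>h) {..<n} (error n) (4 * p_sup / real n)"
proof (rule bounded_differencesI)
  fix \<omega> \<omega>' :: "nat \<Rightarrow> 'a \<times> 'b" and m assume "m \<in> {..<n}" "\<And>j. j \<in> {..<n} \<Longrightarrow> j \<noteq> m \<Longrightarrow> \<omega> j = \<omega>' j"
  then have "norm (estimator n \<omega> - estimator n \<omega>') \<le> 4 * p_sup / real n"
    by (intro norm_estimator_diff_le) auto
  then show "\<bar>error n \<omega> - error n \<omega>'\<bar> \<le> 4 * p_sup / real n"
    using norm_triangle_ineq3[of "estimator n \<omega> - target" "estimator n \<omega>' - target"] by simp
qed

lemma estimator_component_mean_square_error:
  assumes "n \<ge> 1"
  shows "(\<integral>\<omega>. (estimator n \<omega> $ k - target $ k)\<^sup>2 \<partial>sample n) \<le> 20 * p_sup\<^sup>2 / real n"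
proof -
  interpret S: prob_space "sample n" by (rule prob_space_sample)
  let ?X = "\<lambda>\<omega>. estimator n \<omega> $ k"
  have X_measurable: "?X \<in> borel_measurable (sample n)"
    by (rule component_measurable[OF estimator_measurable])
  have X_bound: "\<forall>\<omega>\<in>space (sample n). \<bar>?X \<omega>\<bar> \<le> p_sup"
    using order_trans[OF component_le_norm_cart norm_estimator_le[OF assms]] by blast
  have X_integrable: "integrable (sample n) ?X"
    using X_measurable X_bound by (intro S.integrable_bounded) auto
  have X2_integrable: "integrable (sample n) (\<lambda>\<omega>. (?X \<omega>)\<^sup>2)"
    using X_measurable X_bound
    by (intro S.integrable_bounded[where K="p_sup\<^sup>2"]) (auto simp: power2_le_iff_abs_le)
  have "S.expectation (\<lambda>\<omega>. (?X \<omega>)\<^sup>2) - (S.expectation ?X)\<^sup>2 \<le> real n * (4 * p_sup / real n)\<^sup>2"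
    using product_prob_space.bounded_differences_second_moment[OF product_prob_space_iid
        finite_lessThan X_measurable X_bound estimator_component_bounded_differences[OF assms]]
    by simp
  also have "\<dots> = 16 * p_sup\<^sup>2 / real n"
    using assms by (simp add: power2_eq_square)
  finally have variance:
    "S.expectation (\<lambda>\<omega>. (?X \<omega>)\<^sup>2) - (S.expectation ?X)\<^sup>2 \<le> 16 * p_sup\<^sup>2 / real n" .
  have "(S.expectation ?X - target $ k)\<^sup>2 \<le> (2 * p_sup / real n)\<^sup>2"
    using power_mono[OF expectation_estimator_component_bias[OF assms] abs_ge_zero, where n=2]
    by simp
  also have "\<dots> = 4 * p_sup\<^sup>2 / (real n * real n)"
    by (simp add: power2_eq_square)
  also have "\<dots> \<le> 4 * p_sup\<^sup>2 / real n"
    using assms by (intro divide_left_mono) auto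
  finally have bias: "(S.expectation ?X - target $ k)\<^sup>2 \<le> 4 * p_sup\<^sup>2 / real n" .
  show ?thesis
    using S.expectation_square_diff[OF X_integrable X2_integrable, of "target $ k"] variance bias
    by simp
qed

lemma estimator_mean_square_error:
  assumes "n \<ge> 1"
  shows "(\<integral>\<omega>. (error n \<omega>)\<^sup>2 \<partial>sample n) \<le> CARD('s) * (20 * p_sup\<^sup>2) / real n"
proof -
  interpret S: prob_space "sample n" by (rule prob_space_sample)
  have square_error: "(error n \<omega>)\<^sup>2 = (\<Sum>k\<in>UNIV. (estimator n \<omega> $ k - target $ k)\<^sup>2)" for \<omega>
    unfolding norm_vec_def L2_set_def by (simp add: sum_nonneg)
  have "\<bar>estimator n \<omega> $ k - target $ k\<bar> \<le> 2 * p_sup" for \<omega> k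
    using order_trans[OF component_le_norm_cart norm_estimator_le[OF assms], of \<omega> k]
      abs_target_component_le[of k] abs_triangle_ineq4[of "estimator n \<omega> $ k" "target $ k"]
    by linarith
  then have "(estimator n \<omega> $ k - target $ k)\<^sup>2 \<le> (2 * p_sup)\<^sup>2" for \<omega> k
    using power_mono[OF _ abs_ge_zero, where n=2] by (metis power2_abs)
  then have "integrable (sample n) (\<lambda>\<omega>. (estimator n \<omega> $ k - target $ k)\<^sup>2)" for k
    using component_measurable[OF estimator_measurable]
    by (intro S.integrable_bounded[where K="(2 * p_sup)\<^sup>2"]) auto
  then have "(\<integral>\<omega>. (error n \<omega>)\<^sup>2 \<partial>sample n)
      = (\<Sum>k\<in>UNIV. \<integral>\<omega>. (estimator n \<omega> $ k - target $ k)\<^sup>2 \<partial>sample n)"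
    unfolding square_error by (intro Bochner_Integration.integral_sum)
  also have "\<dots> \<le> (\<Sum>k\<in>(UNIV :: 's set). 20 * p_sup\<^sup>2 / real n)"
    by (intro sum_mono estimator_component_mean_square_error[OF assms])
  finally show ?thesis by simp
qed

lemma error_measurable: "error n \<in> borel_measurable (sample n)"
  using estimator_measurable by measurable

lemma abs_error_le: "n \<ge> 1 \<Longrightarrow> \<bar>error n \<omega>\<bar> \<le> p_sup + norm target"
  using norm_triangle_ineq4[of "estimator n \<omega>" target] norm_estimator_le[of n \<omega>] by simp

lemma expectation_error_le:
  assumes "n \<ge> 1"
  shows "(\<integral>\<omega>. error n \<omega> \<partial>sample n) \<le> sqrt (CARD('s) * (20 * p_sup\<^sup>2)) / sqrt (real n)"
proof -
  interpret S: prob_space "sample n" by (rule prob_space_sample)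
  have "integrable (sample n) (error n)"
    using error_measurable abs_error_le[OF assms] by (rule S.integrable_bounded)
  moreover have "(error n \<omega>)\<^sup>2 \<le> (p_sup + norm target)\<^sup>2" for \<omega>
    using power_mono[OF abs_error_le[OF assms] abs_ge_zero, where n=2] by simp
  then have "integrable (sample n) (\<lambda>\<omega>. (error n \<omega>)\<^sup>2)"
    using error_measurable by (intro S.integrable_bounded) auto
  ultimately have "(\<integral>\<omega>. error n \<omega> \<partial>sample n)\<^sup>2 \<le> (\<integral>\<omega>. (error n \<omega>)\<^sup>2 \<partial>sample n)"
    using S.variance_eq[of "error n"] S.variance_positive[of "error n"] by simp
  also have "\<dots> \<le> CARD('s) * (20 * p_sup\<^sup>2) / real n"
    by (rule estimator_mean_square_error[OF assms])
  finally show ?thesis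
    by (simp add: real_le_rsqrt flip: real_sqrt_divide)
qed

lemma error_tail:
  assumes "n \<ge> 1" "p_sup > 0" "t > 0"
  shows "measure (sample n) {\<omega> \<in> space (sample n).
           (\<integral>\<omega>. error n \<omega> \<partial>sample n) + t / sqrt (real n) \<le> error n \<omega>}
         \<le> exp (- t\<^sup>2 / (32 * p_sup\<^sup>2))"
proof -
  have "measure (sample n) {\<omega> \<in> space (sample n).
           (\<integral>\<omega>. error n \<omega> \<partial>sample n) + t / sqrt (real n) \<le> error n \<omega>}
        \<le> exp (- (t / sqrt (real n))\<^sup>2 / (2 * card {..<n} * (4 * p_sup / real n)\<^sup>2))"
    using abs_error_le[OF assms(1)] assms
    by (intro product_prob_space.bounded_differences_tail[OF product_prob_space_iid]
        finite_lessThan error_measurable error_bounded_differences)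
       (auto simp: lessThan_empty_iff)
  also have "- (t / sqrt (real n))\<^sup>2 / (2 * card {..<n} * (4 * p_sup / real n)\<^sup>2)
      = - t\<^sup>2 / (32 * p_sup\<^sup>2)"
    using assms by (simp add: field_simps) (simp add: power2_eq_square)
  finally show ?thesis .
qed

lemma mean_square_error_bigo: "(\<lambda>n. \<integral>\<omega>. (error n \<omega>)\<^sup>2 \<partial>sample n) \<in> O(\<lambda>n. 1 / real n)"
proof (rule bigoI)
  have "norm (\<integral>\<omega>. (error n \<omega>)\<^sup>2 \<partial>sample n) \<le> CARD('s) * (20 * p_sup\<^sup>2) * norm (1 / real n)"
    if "n \<ge> 1" for n
    using estimator_mean_square_error[OF that] by simp
  then show "\<forall>\<^sub>F n in at_top.
      norm (\<integral>\<omega>. (error n \<omega>)\<^sup>2 \<partial>sample n) \<le> CARD('s) * (20 * p_sup\<^sup>2) * norm (1 / real n)"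
    unfolding eventually_at_top_linorder by blast
qed

lemma error_concentration:
  assumes "n \<ge> 1" "t > 0"
  shows "measure (sample n) {\<omega> \<in> space (sample n).
           error n \<omega> \<le> (sqrt (CARD('s) * (20 * p_sup\<^sup>2)) + 1) * (1 + t) / sqrt (real n)}
         \<ge> 1 - 2 * exp (- 2 * t\<^sup>2 / (64 * p_sup\<^sup>2))"
proof (cases "p_sup = 0")
  case True
  then have "1 - 2 * exp (- 2 * t\<^sup>2 / (64 * p_sup\<^sup>2)) \<le> 0" by simp
  then show ?thesis by (rule order_trans[OF _ measure_nonneg])
next
  case False
  interpret S: prob_space "sample n" by (rule prob_space_sample)
  let ?c = "sqrt (CARD('s) * (20 * p_sup\<^sup>2)) + 1"
  let ?good = "{\<omega> \<in> space (sample n). error n \<omega> \<le> ?c * (1 + t) / sqrt (real n)}"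
  let ?bad = "{\<omega> \<in> space (sample n). (\<integral>\<omega>. error n \<omega> \<partial>sample n) + t / sqrt (real n) \<le> error n \<omega>}"
  have "sqrt (CARD('s) * (20 * p_sup\<^sup>2)) + t \<le> ?c * (1 + t)"
    using mult_nonneg_nonneg[of "sqrt (CARD('s) * (20 * p_sup\<^sup>2))" t] assms(2)
    by (simp add: algebra_simps)
  then have "(sqrt (CARD('s) * (20 * p_sup\<^sup>2)) + t) / sqrt (real n) \<le> ?c * (1 + t) / sqrt (real n)"
    by (rule divide_right_mono) simp
  then have "(\<integral>\<omega>. error n \<omega> \<partial>sample n) + t / sqrt (real n) \<le> ?c * (1 + t) / sqrt (real n)"
    using expectation_error_le[OF assms(1)] by (simp add: add_divide_distrib)
  then have "space (sample n) - ?good \<subseteq> ?bad" by auto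
  then have "1 - S.prob ?good \<le> S.prob ?bad"
    using error_measurable by (subst S.prob_compl[symmetric]) (auto intro!: S.finite_measure_mono)
  also have "\<dots> \<le> exp (- t\<^sup>2 / (32 * p_sup\<^sup>2))"
    using error_tail[OF assms(1) _ assms(2)] False p_sup_nonneg by simp
  finally have "1 - S.prob ?good \<le> exp (- t\<^sup>2 / (32 * p_sup\<^sup>2))" .
  moreover have "exp (- 2 * t\<^sup>2 / (64 * p_sup\<^sup>2)) = exp (- t\<^sup>2 / (32 * p_sup\<^sup>2))"
    by simp
  ultimately show ?thesis
    using exp_ge_zero[of "- t\<^sup>2 / (32 * p_sup\<^sup>2)"] by linarith
qed

end

theorem proposition10:
  fixes \<alpha> :: "('a::metric_space) measure" and \<beta> :: "('b::metric_space) measure"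
    and C :: "'a \<times> 'b \<Rightarrow> real^'s"
    and \<pi>hat :: "('a \<times> 'b) measure"
    and p :: "'a \<times> 'b \<Rightarrow> real"
  assumes "compact (UNIV :: 'a set)" and "compact (UNIV :: 'b set)"
    and "prob_space \<alpha>" and "sets \<alpha> = sets borel"
    and "prob_space \<beta>" and "sets \<beta> = sets borel"
    and "continuous_on UNIV C" and "\<And>z. norm (C z) \<le> 1"
    and "is_coupling \<alpha> \<beta> \<pi>hat"
    and "p \<in> borel_measurable (\<alpha> \<Otimes>\<^sub>M \<beta>)" and "\<And>z. 0 \<le> p z" and "bounded (range p)"
    and "is_coupling \<alpha> \<beta> (density (\<alpha> \<Otimes>\<^sub>M \<beta>) (\<lambda>z. ennreal (p z)))"
  shows "(\<lambda>n. integral\<^sup>L (PiM {..<n} (\<lambda>_. \<pi>hat))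
            (\<lambda>\<omega>. (norm (Phi_hat_star_P C p n \<omega> - Phi_star_density C (\<alpha> \<Otimes>\<^sub>M \<beta>) p))\<^sup>2))
         \<in> O(\<lambda>n. 1 / real n)
      \<and> (\<exists>c::real. \<forall>n::nat. \<forall>t::real. n \<ge> 1 \<longrightarrow> t > 0 \<longrightarrow>
           measure (PiM {..<n} (\<lambda>_. \<pi>hat))
             {\<omega> \<in> space (PiM {..<n} (\<lambda>_. \<pi>hat)).
                norm (Phi_hat_star_P C p n \<omega> - Phi_star_density C (\<alpha> \<Otimes>\<^sub>M \<beta>) p)
                  \<le> c * (1 + t) / sqrt (real n)}
           \<ge> 1 - 2 * exp (- 2 * t\<^sup>2 / (64 * (SUP z. \<bar>p z\<bar>)\<^sup>2)))"
proof -
  interpret empirical_coupling \<alpha> \<beta> C \<pi>hat p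
    by (rule empirical_coupling.intro) (fact assms)+
  have "\<forall>n t. n \<ge> 1 \<longrightarrow> t > 0 \<longrightarrow>
      measure (sample n) {\<omega> \<in> space (sample n).
        error n \<omega> \<le> (sqrt (CARD('s) * (20 * p_sup\<^sup>2)) + 1) * (1 + t) / sqrt (real n)}
      \<ge> 1 - 2 * exp (- 2 * t\<^sup>2 / (64 * p_sup\<^sup>2))"
    using error_concentration by blast
  then show ?thesis
    using mean_square_error_bigo by blast
qed

end
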